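(* Every finite graph is isomorphic to an induced subgraph of the dual enhanced power graph of some finite group, and this group can be taken to be cyclic.
   Context: The dual enhanced power graph $\mathrm{DEP}(G)$ of a group $G$ has vertex set $G\setminus\{1\}$, with distinct $x,y$ adjacent iff $\langle x\rangle\cap\langle y\rangle\ne\{1\}$. *)

theory Defs
  imports "HOL-Algebra.Elementary_Groups"
begin

definition finite_simple_graph :: "'a set \<Rightarrow> ('a \<Rightarrow> 'a \<Rightarrow> bool) \<Rightarrow> bool" where
  "finite_simple_graph V E \<longleftrightarrow> finite V \<and>
     (\<forall>u\<in>V. \<forall>v\<in>V. E u v \<longrightarrow> E v u) \<and> (\<forall>v\<in>V. \<not> E v v)"

definition dep_vertices :: "('g, 'b) monoid_scheme \<Rightarrow> 'g set" where
  "dep_vertices G = carrier G - {\<one>\<^bsub>G\<^esub>}"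

definition dep_adj :: "('g, 'b) monoid_scheme \<Rightarrow> 'g \<Rightarrow> 'g \<Rightarrow> bool" where
  "dep_adj G x y \<longleftrightarrow> x \<in> dep_vertices G \<and> y \<in> dep_vertices G \<and> x \<noteq> y \<and>
     generate G {x} \<inter> generate G {y} \<noteq> {\<one>\<^bsub>G\<^esub>}"

definition induced_embedding ::
  "'a set \<Rightarrow> ('a \<Rightarrow> 'a \<Rightarrow> bool) \<Rightarrow> 'c set \<Rightarrow> ('c \<Rightarrow> 'c \<Rightarrow> bool) \<Rightarrow> ('a \<Rightarrow> 'c) \<Rightarrow> bool" where
  "induced_embedding V E W F f \<longleftrightarrow> inj_on f V \<and> f ` V \<subseteq> W \<and>
     (\<forall>u\<in>V. \<forall>v\<in>V. E u v \<longleftrightarrow> F (f u) (f v))"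

end

theory Submission
  imports Defs "HOL-Algebra.Multiplicative_Group" "HOL-Computational_Algebra.Primes"
begin

(* Label every vertex v by a prime attached to {v} = {v, v} and every edge by a prime attached to
   {u, v}, let S v be the set of labels of the vertex v and its incident edges, P the set of all
   labels and N = \<Prod>P. Distinct vertices are adjacent iff their label sets meet, and S is
   injective. Send v to d v = \<Prod>(P - S v) in the cyclic group Z/N. The subgroup generated by a
   divisor d of N consists of the multiples of d, so <d u> and <d v> meet in <lcm (d u) (d v)>,
   and as N is squarefree, lcm (d u) (d v) = \<Prod>(P - (S u \<inter> S v)), which equals N iff
   S u and S v are disjoint. *)

definition nat_mod_group :: "nat \<Rightarrow> nat monoid" where
  "nat_mod_group N = \<lparr>carrier = {0..<N}, monoid.mult = (\<lambda>x y. (x + y) mod N), one = 0\<rparr>"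

lemma carrier_nat_mod_group [simp]: "carrier (nat_mod_group N) = {0..<N}"
  by (simp add: nat_mod_group_def)

lemma one_nat_mod_group [simp]: "\<one>\<^bsub>nat_mod_group N\<^esub> = 0"
  by (simp add: nat_mod_group_def)

lemma mult_nat_mod_group [simp]: "x \<otimes>\<^bsub>nat_mod_group N\<^esub> y = (x + y) mod N"
  by (simp add: nat_mod_group_def)

lemma group_nat_mod_group:
  assumes "0 < N"
  shows "group (nat_mod_group N)"
proof (rule groupI)
  fix x assume "x \<in> carrier (nat_mod_group N)"
  then show "\<exists>y\<in>carrier (nat_mod_group N). y \<otimes>\<^bsub>nat_mod_group N\<^esub> x = \<one>\<^bsub>nat_mod_group N\<^esub>"
    by (intro bexI[of _ "(N - x) mod N"]) (auto simp: mod_add_left_eq assms)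
qed (auto simp: assms mod_add_left_eq mod_add_right_eq add.assoc)

lemma pow_nat_mod_group:
  assumes "x < N"
  shows "x [^]\<^bsub>nat_mod_group N\<^esub> (k::nat) = k * x mod N"
  using assms by (induction k) (auto simp: nat_mod_group_def mod_add_right_eq add.commute)

lemma generate_nat_mod_group:
  assumes "x < N"
  shows "generate (nat_mod_group N) {x} = range (\<lambda>k. k * x mod N)"
proof -
  interpret group "nat_mod_group N"
    using assms by (simp add: group_nat_mod_group)
  have "generate (nat_mod_group N) {x} = {x [^]\<^bsub>nat_mod_group N\<^esub> k | k. k \<in> (UNIV :: nat set)}"
    using assms by (intro generate_pow_on_finite_carrier) auto
  then show ?thesis
    using pow_nat_mod_group[OF assms] by auto
qed

lemma cyclic_nat_mod_group:
  assumes "0 < N"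
  shows "cyclic_group (nat_mod_group N)"
proof -
  have "k * (1 mod N) mod N = k mod N" for k
    by (simp add: mod_mult_right_eq)
  moreover have "y \<in> range (\<lambda>k. k mod N)" if "y < N" for y
    using that by (intro image_eqI[of _ _ y]) simp_all
  ultimately have "generate (nat_mod_group N) {1 mod N} = carrier (nat_mod_group N)"
    using assms by (auto simp: generate_nat_mod_group)
  moreover have "carrier (nat_mod_group N) \<inter> {1 mod N} = {1 mod N}"
    using assms by auto
  ultimately have "subgroup_generated (nat_mod_group N) {1 mod N} = nat_mod_group N"
    unfolding subgroup_generated_def by (simp add: nat_mod_group_def)
  then show ?thesis
    using assms cyclic_group_def by fastforce
qed

lemma generate_divisor_nat_mod_group:
  assumes "d dvd N" "d < N"
  shows "generate (nat_mod_group N) {d} = {y. y < N \<and> d dvd y}"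
proof -
  have "range (\<lambda>k. k * d mod N) = {y. y < N \<and> d dvd y}"
  proof (intro equalityI subsetI)
    fix y assume "y \<in> range (\<lambda>k. k * d mod N)"
    then obtain k where "y = k * d mod N"
      by blast
    then show "y \<in> {y. y < N \<and> d dvd y}"
      using assms by (simp add: dvd_mod)
  next
    fix y assume "y \<in> {y. y < N \<and> d dvd y}"
    then have "y = y div d * d mod N"
      by simp
    then show "y \<in> range (\<lambda>k. k * d mod N)"
      by blast
  qed
  then show ?thesis
    using assms by (simp add: generate_nat_mod_group)
qed

lemma generate_divisors_inter_trivial_iff:
  assumes "d dvd N" "e dvd N" "d < N" "e < N"
  shows "generate (nat_mod_group N) {d} \<inter> generate (nat_mod_group N) {e} = {0} \<longleftrightarrow> lcm d e = N"
proof -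
  have inter: "generate (nat_mod_group N) {d} \<inter> generate (nat_mod_group N) {e} = {y. y < N \<and> lcm d e dvd y}"
    unfolding generate_divisor_nat_mod_group[OF assms(1,3)] generate_divisor_nat_mod_group[OF assms(2,4)]
      lcm_least_iff by blast
  have "0 < N"
    using assms(3) by simp
  then have "0 < d" "0 < e"
    using assms(1,2) dvd_pos_nat by blast+
  then have lcm_pos: "0 < lcm d e"
    by (simp add: lcm_pos_nat)
  have lcm_le: "lcm d e \<le> N"
    using dvd_imp_le[OF lcm_least[OF assms(1,2)] \<open>0 < N\<close>] .
  show ?thesis
  proof
    assume trivial: "generate (nat_mod_group N) {d} \<inter> generate (nat_mod_group N) {e} = {0}"
    show "lcm d e = N"
    proof (rule ccontr)
      assume "lcm d e \<noteq> N"
      then have "lcm d e \<in> generate (nat_mod_group N) {d} \<inter> generate (nat_mod_group N) {e}"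
        unfolding inter using lcm_le by simp
      then have "lcm d e = 0"
        using trivial by blast
      with lcm_pos show False
        by simp
    qed
  next
    assume "lcm d e = N"
    then show "generate (nat_mod_group N) {d} \<inter> generate (nat_mod_group N) {e} = {0}"
      unfolding inter using \<open>0 < N\<close> by (auto dest: dvd_imp_le)
  qed
qed

lemma prime_factorization_prod_primes:
  fixes X :: "nat set"
  assumes "finite X" "\<forall>p\<in>X. prime p"
  shows "prime_factorization (\<Prod>X) = mset_set X"
proof -
  have "\<Prod>X = prod_mset (mset_set X)"
    using prod_unfold_prod_mset[of "\<lambda>x. x" X] by (simp only: image_mset_id[unfolded id_def])
  moreover have "prime_factorization (prod_mset (mset_set X)) = mset_set X"
    using assms by (intro prime_factorization_prod_mset_primes) auto
  ultimately show ?thesis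
    by (simp only:)
qed

lemma prod_primes_eq_iff:
  fixes X Y :: "nat set"
  assumes "finite X" "finite Y" "\<forall>p\<in>X. prime p" "\<forall>p\<in>Y. prime p"
  shows "\<Prod>X = \<Prod>Y \<longleftrightarrow> X = Y"
proof
  assume "\<Prod>X = \<Prod>Y"
  then have "mset_set X = mset_set Y"
    using assms by (metis prime_factorization_prod_primes)
  then show "X = Y"
    using assms by simp
qed simp

lemma lcm_prod_primes:
  fixes X Y :: "nat set"
  assumes "finite X" "finite Y" "\<forall>p\<in>X. prime p" "\<forall>p\<in>Y. prime p"
  shows "lcm (\<Prod>X) (\<Prod>Y) = \<Prod>(X \<union> Y)"
proof -
  have nonzero: "\<Prod>Z \<noteq> 0" if "\<forall>p\<in>Z. prime p" for Z :: "nat set"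
    using that by (simp add: prime_gt_0_nat prod_pos)
  have "prime_factorization (lcm (\<Prod>X) (\<Prod>Y)) = prime_factorization (\<Prod>X) \<union># prime_factorization (\<Prod>Y)"
    using assms by (intro prime_factorization_lcm nonzero)
  also have "\<dots> = mset_set X \<union># mset_set Y"
    using assms by (simp only: prime_factorization_prod_primes)
  also have "\<dots> = mset_set (X \<union> Y)"
    using assms by (auto simp: multiset_eq_iff count_mset_set')
  also have "\<dots> = prime_factorization (\<Prod>(X \<union> Y))"
    using assms by (intro prime_factorization_prod_primes[symmetric]) auto
  finally have "normalize (lcm (\<Prod>X) (\<Prod>Y)) = normalize (\<Prod>(X \<union> Y))"
    using assms nonzero[of "X \<union> Y"] by (subst (asm) prime_factorization_unique) auto
  then show ?thesis
    by simp
qed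

definition intersection_representation :: "'a set \<Rightarrow> ('a \<Rightarrow> 'a \<Rightarrow> bool) \<Rightarrow> ('a \<Rightarrow> 'b set) \<Rightarrow> bool" where
  "intersection_representation V E S \<longleftrightarrow> inj_on S V \<and> (\<forall>v\<in>V. S v \<noteq> {}) \<and>
     (\<forall>u\<in>V. \<forall>v\<in>V. u \<noteq> v \<longrightarrow> (E u v \<longleftrightarrow> S u \<inter> S v \<noteq> {}))"

lemma intersection_representation_incident_pairs:
  assumes sym: "\<forall>u\<in>V. \<forall>v\<in>V. E u v \<longrightarrow> E v u"
  shows "intersection_representation V E (\<lambda>v. {{u, v} | u. u \<in> V \<and> (u = v \<or> E u v)})"
proof -
  define S where "S v = {{u, v} | u. u \<in> V \<and> (u = v \<or> E u v)}" for v
  have self: "{v} \<in> S v" if "v \<in> V" for v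
    using that unfolding S_def by auto
  have common: "x = {u, v} \<and> E u v"
    if "x \<in> S u" "x \<in> S v" and uv: "u \<in> V" "v \<in> V" "u \<noteq> v" for x u v
  proof -
    obtain a b where "x = {a, u}" "x = {b, v}" "a \<in> V" "a = u \<or> E a u"
      using \<open>x \<in> S u\<close> \<open>x \<in> S v\<close> unfolding S_def by blast
    then have "a = v" "x = {u, v}"
      using \<open>u \<noteq> v\<close> by (auto simp: doubleton_eq_iff)
    then show ?thesis
      using \<open>a = u \<or> E a u\<close> sym uv by auto
  qed
  have "inj_on S V"
  proof (rule inj_onI, rule ccontr)
    fix u v assume "u \<in> V" "v \<in> V" "S u = S v" "u \<noteq> v"
    then have "{u} = {u, v}"
      using self common by metis
    with \<open>u \<noteq> v\<close> show False
      by (simp add: doubleton_eq_iff)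
  qed
  moreover have "E u v \<longleftrightarrow> S u \<inter> S v \<noteq> {}" if "u \<in> V" "v \<in> V" "u \<noteq> v" for u v
  proof
    assume "E u v"
    then have "{v, u} \<in> S u" "{u, v} \<in> S v"
      using sym that unfolding S_def by blast+
    then show "S u \<inter> S v \<noteq> {}"
      by (auto simp: insert_commute)
  next
    assume "S u \<inter> S v \<noteq> {}"
    then show "E u v"
      using common that by blast
  qed
  ultimately show ?thesis
    using self unfolding intersection_representation_def S_def by blast
qed

lemma intersection_representation_image:
  assumes rep: "intersection_representation V E S" and inj: "inj_on f (\<Union>(S ` V))"
  shows "intersection_representation V E (\<lambda>v. f ` S v)"
proof -
  have image_eq_iff: "f ` S u = f ` S v \<longleftrightarrow> S u = S v" if "u \<in> V" "v \<in> V" for u v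
    using that by (intro inj_on_image_eq_iff[OF inj]) auto
  have image_Int: "f ` S u \<inter> f ` S v = f ` (S u \<inter> S v)" if "u \<in> V" "v \<in> V" for u v
    using that by (intro inj_on_image_Int[OF inj, symmetric]) auto
  have "inj_on (\<lambda>v. f ` S v) V"
  proof (rule inj_onI)
    fix u v assume "u \<in> V" "v \<in> V" "f ` S u = f ` S v"
    then have "S u = S v"
      using image_eq_iff by blast
    then show "u = v"
      using rep \<open>u \<in> V\<close> \<open>v \<in> V\<close> unfolding intersection_representation_def inj_on_def by blast
  qed
  moreover have "\<forall>v\<in>V. f ` S v \<noteq> {}"
    using rep by (simp add: intersection_representation_def)
  moreover have "\<forall>u\<in>V. \<forall>v\<in>V. u \<noteq> v \<longrightarrow> (E u v \<longleftrightarrow> f ` S u \<inter> f ` S v \<noteq> {})"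
    using rep image_Int by (simp add: intersection_representation_def)
  ultimately show ?thesis
    unfolding intersection_representation_def by blast
qed

lemma ex_inj_on_primes:
  assumes "finite X"
  shows "\<exists>f. inj_on f X \<and> (\<forall>x\<in>X. prime (f x :: nat))"
proof -
  obtain Q :: "nat set" where Q: "finite Q" "card Q = card X" "Q \<subseteq> {p. prime p}"
    using infinite_arbitrarily_large[OF primes_infinite] by blast
  obtain f where "bij_betw f X Q"
    using finite_same_card_bij[OF assms Q(1) Q(2)[symmetric]] ..
  then have "inj_on f X" "f ` X = Q"
    by (simp_all add: bij_betw_def)
  then show ?thesis
    using Q(3) by blast
qed

lemma ex_prime_intersection_representation:
  assumes "finite_simple_graph V E"
  shows "\<exists>P (S :: 'a \<Rightarrow> nat set). finite P \<and> (\<forall>p\<in>P. prime p) \<and> (\<forall>v\<in>V. S v \<subseteq> P) \<and>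
           intersection_representation V E S"
proof -
  define T where "T v = {{u, v} | u. u \<in> V \<and> (u = v \<or> E u v)}" for v
  have rep: "intersection_representation V E T"
    unfolding T_def using assms
    by (intro intersection_representation_incident_pairs) (simp add: finite_simple_graph_def)
  have "\<Union>(T ` V) \<subseteq> Pow V"
    unfolding T_def by auto
  moreover have "finite (Pow V)"
    using assms by (simp add: finite_simple_graph_def)
  ultimately have "finite (\<Union>(T ` V))"
    by (rule finite_subset)
  then obtain f :: "'a set \<Rightarrow> nat" where f: "inj_on f (\<Union>(T ` V))" "\<forall>x\<in>\<Union>(T ` V). prime (f x)"
    using ex_inj_on_primes by blast
  have "finite (f ` \<Union>(T ` V))"
    using \<open>finite (\<Union>(T ` V))\<close> by blast
  moreover have "\<forall>p\<in>f ` \<Union>(T ` V). prime p" "\<forall>v\<in>V. f ` T v \<subseteq> f ` \<Union>(T ` V)"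
    using f(2) by blast+
  moreover have "intersection_representation V E (\<lambda>v. f ` T v)"
    using intersection_representation_image[OF rep f(1)] .
  ultimately show ?thesis
    by (intro exI[of _ "f ` \<Union>(T ` V)"] exI[of _ "\<lambda>v. f ` T v"]) simp
qed

lemma induced_embedding_nat_mod_group:
  fixes S :: "'a \<Rightarrow> nat set"
  assumes P: "finite P" "\<forall>p\<in>P. prime p" and S: "\<forall>v\<in>V. S v \<subseteq> P"
    and rep: "intersection_representation V E S" and irrefl: "\<forall>v\<in>V. \<not> E v v"
  shows "induced_embedding V E (dep_vertices (nat_mod_group (\<Prod>P))) (dep_adj (nat_mod_group (\<Prod>P)))
           (\<lambda>v. \<Prod>(P - S v))"
proof -
  define N where "N = \<Prod>P"
  define d where "d = (\<lambda>v. \<Prod>(P - S v))"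
  have prod_eq_iff: "\<Prod>(P - A) = \<Prod>(P - B) \<longleftrightarrow> P - A = P - B" for A B
    using P by (intro prod_primes_eq_iff) auto
  have d_eq_iff: "d u = d v \<longleftrightarrow> u = v" if "u \<in> V" "v \<in> V" for u v
  proof -
    have "d u = d v \<longleftrightarrow> S u = S v"
      using prod_eq_iff[of "S u" "S v"] S that unfolding d_def by blast
    also have "\<dots> \<longleftrightarrow> u = v"
      using rep that unfolding intersection_representation_def inj_on_def by blast
    finally show ?thesis .
  qed
  have "0 < N"
    unfolding N_def using P(2) by (simp add: prime_gt_0_nat prod_pos)
  have d_dvd: "d v dvd N" for v
    unfolding d_def N_def using P(1) by (intro prod_dvd_prod_subset) auto
  have d_less: "d v < N" if "v \<in> V" for v
  proof -
    have "S v \<noteq> {}"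
      using rep that by (simp add: intersection_representation_def)
    then have "P - S v \<noteq> P - {}"
      using S that by blast
    then have "d v \<noteq> N"
      unfolding d_def N_def using prod_eq_iff[of "S v" "{}"] by simp
    moreover have "d v \<le> N"
      using dvd_imp_le[OF d_dvd \<open>0 < N\<close>] .
    ultimately show ?thesis
      by simp
  qed
  have d_vertex: "d v \<in> dep_vertices (nat_mod_group N)" if "v \<in> V" for v
  proof -
    have "0 < d v"
      unfolding d_def using P(2) by (auto simp: prime_gt_0_nat intro!: prod_pos)
    then show ?thesis
      using d_less[OF that] by (simp add: dep_vertices_def)
  qed
  have lcm_eq_iff: "lcm (d u) (d v) = N \<longleftrightarrow> S u \<inter> S v = {}" if "u \<in> V" "v \<in> V" for u v
  proof -
    have "lcm (d u) (d v) = \<Prod>((P - S u) \<union> (P - S v))"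
      unfolding d_def using P by (intro lcm_prod_primes) auto
    also have "(P - S u) \<union> (P - S v) = P - (S u \<inter> S v)"
      by blast
    finally have "lcm (d u) (d v) = N \<longleftrightarrow> P - (S u \<inter> S v) = P - {}"
      unfolding N_def using prod_eq_iff[of "S u \<inter> S v" "{}"] by simp
    also have "\<dots> \<longleftrightarrow> S u \<inter> S v = {}"
      using S that by blast
    finally show ?thesis .
  qed
  have adj_iff: "E u v \<longleftrightarrow> dep_adj (nat_mod_group N) (d u) (d v)" if "u \<in> V" "v \<in> V" for u v
  proof (cases "u = v")
    case True
    then show ?thesis
      using irrefl that by (simp add: dep_adj_def)
  next
    case False
    have "generate (nat_mod_group N) {d u} \<inter> generate (nat_mod_group N) {d v} = {0}
          \<longleftrightarrow> S u \<inter> S v = {}"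
      using generate_divisors_inter_trivial_iff[OF d_dvd d_dvd d_less d_less] lcm_eq_iff that by simp
    moreover have "E u v \<longleftrightarrow> S u \<inter> S v \<noteq> {}"
      using rep that False by (simp add: intersection_representation_def)
    ultimately show ?thesis
      using d_vertex d_eq_iff that False by (simp add: dep_adj_def)
  qed
  have "inj_on d V"
    using d_eq_iff by (auto intro: inj_onI)
  then show ?thesis
    unfolding induced_embedding_def d_def[symmetric] N_def[symmetric]
    using d_vertex adj_iff by blast
qed

theorem mainTheorem11:
  fixes V :: "'a set" and E :: "'a \<Rightarrow> 'a \<Rightarrow> bool"
  assumes "finite_simple_graph V E"
  shows "\<exists>G :: nat monoid. group G \<and> finite (carrier G) \<and> cyclic_group G \<and>
           (\<exists>f. induced_embedding V E (dep_vertices G) (dep_adj G) f)"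
proof -
  obtain P and S :: "'a \<Rightarrow> nat set"
    where P: "finite P" "\<forall>p\<in>P. prime p" and S: "\<forall>v\<in>V. S v \<subseteq> P"
      and rep: "intersection_representation V E S"
    using ex_prime_intersection_representation[OF assms] by blast
  have irrefl: "\<forall>v\<in>V. \<not> E v v"
    using assms by (simp add: finite_simple_graph_def)
  have "0 < \<Prod>P"
    using P(2) by (simp add: prime_gt_0_nat prod_pos)
  then have "group (nat_mod_group (\<Prod>P))" "finite (carrier (nat_mod_group (\<Prod>P)))"
    "cyclic_group (nat_mod_group (\<Prod>P))"
    by (simp_all add: group_nat_mod_group cyclic_nat_mod_group)
  moreover note induced_embedding_nat_mod_group[OF P S rep irrefl]
  ultimately show ?thesis
    by blast
qed

end
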